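(* Let $A_N^*$ be the event of Lemma 2.2 (an event in $\mathcal F^+_{\tau_N}$ with $\mathbb P[(A_N^* )^c]=O(N^{-1/8})$ on which $\sup_{x\ge0}|G_N(x)-G(x)|\le\varepsilon_N$ for a deterministic $\varepsilon_N=O(N^{-1/6})$). Suppose $G$ satisfies Assumption 2. If $b<\infty$, then there is a deterministic sequence $r_N\to0$ such that on $A_N^*$, $\sup_{0\le u\le1}|G_N^{-1}(u)-G^{-1}(u)|\le r_N$. If $b=\infty$, then there exist $\alpha>0$, deterministic $x_N$ with $N^{-\alpha}x_N$ bounded below as $N\to\infty$, and deterministic $r_N\to0$ such that on $A_N^*$, $\sup_{u:\,G^{-1}(u)\le x_N}|G_N^{-1}(u)-G^{-1}(u)|\le r_N$.
   Context: Assumption 2: the probability distribution function $G$ on $(0,\infty)$ is non-lattice with finite second moment; its support is an open interval $(a,b)$ ($0\le a<b\le\infty$), and $G(A)\ge\int_Ag(x)\,dx$ for all $A\subset(a,b)$ for some continuous positive density $g$ on $(a,b)$; if $b=\infty$ then also $g(x)\ge kx^{-\gamma}$ for all $x\ge x_0$, for some $x_0>a$, $k>0$, $\gamma>3$. $G_N$ is a (random) distribution function (in the paper: the empirical distribution of the points of the reproduction point processes of the individuals not yet infected at time $\tau_N$, measurable w.r.t. the $\sigma$-field $\mathcal F^+_{\tau_N}$). $G^{-1}$, $G_N^{-1}$ denote generalized inverses. *)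

theory Defs
  imports "HOL-Probability.Probability" "HOL-Library.Landau_Symbols"
begin

definition is_distribution_function :: "(real \<Rightarrow> real) \<Rightarrow> bool" where
  "is_distribution_function F \<longleftrightarrow>
     mono F \<and> (\<forall>x. continuous (at_right x) F) \<and>
     (F \<longlongrightarrow> 0) at_bot \<and> (F \<longlongrightarrow> 1) at_top"

definition gen_inv :: "(real \<Rightarrow> real) \<Rightarrow> real \<Rightarrow> real" where
  "gen_inv F u = Inf {x. 0 \<le> x \<and> u \<le> F x}"

definition lattice_distribution :: "real measure \<Rightarrow> bool" where
  "lattice_distribution \<mu> \<longleftrightarrow> (\<exists>d>0. AE x in \<mu>. \<exists>k::int. x = of_int k * d)"

definition assumption2 :: "real measure \<Rightarrow> real \<Rightarrow> ereal \<Rightarrow> bool" where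
  "assumption2 \<mu> a b \<longleftrightarrow>
     prob_space \<mu> \<and> sets \<mu> = sets borel \<and>
     measure \<mu> {..0} = 0 \<and>
     \<not> lattice_distribution \<mu> \<and>
     integrable \<mu> (\<lambda>x. x ^ 2) \<and>
     0 \<le> a \<and> ereal a < b \<and>
     measure \<mu> (- {x. a < x \<and> ereal x < b}) = 0 \<and>
     (\<exists>g :: real \<Rightarrow> real.
        continuous_on {x. a < x \<and> ereal x < b} g \<and>
        (\<forall>x. a < x \<and> ereal x < b \<longrightarrow> g x > 0) \<and>
        (\<forall>A \<in> sets borel. A \<subseteq> {x. a < x \<and> ereal x < b} \<longrightarrow>
            emeasure \<mu> A \<ge> (\<integral>\<^sup>+ x \<in> A. ennreal (g x) \<partial>lborel)) \<and>
        (b = \<infinity> \<longrightarrow> (\<exists>x0 k \<gamma>. x0 > a \<and> k > 0 \<and> \<gamma> > 3 \<and>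
            (\<forall>x \<ge> x0. g x \<ge> k * x powr (-\<gamma>)))))"

end

theory Submission
  imports Defs
begin

text \<open>On the support of \<open>G\<close> the density is bounded below, so \<open>G\<close> gains at least \<open>c h\<close> on
  every window of length \<open>h\<close>. Once the uniform distance \<open>\<epsilon>\<^sub>N\<close> between \<open>G\<^sub>N\<close> and \<open>G\<close> is
  below that gain, the quantiles of \<open>G\<^sub>N\<close> and \<open>G\<close> differ by at most \<open>2h\<close>. For \<open>b < \<infinity>\<close>
  the support is compact and \<open>\<epsilon>\<^sub>N \<rightarrow> 0\<close> suffices. For \<open>b = \<infinity>\<close> the density bound decays
  like \<open>x\<^sup>-\<^sup>\<gamma>\<close>, so quantiles are controlled only below \<open>x\<^sub>N = N\<^sup>\<alpha>\<close>, with \<open>\<alpha>\<close> small enough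
  that \<open>x\<^sub>N\<^sup>-\<^sup>\<gamma>\<close> still dominates \<open>\<epsilon>\<^sub>N = O(N\<^sup>-\<^sup>1\<^sup>/\<^sup>6)\<close>. The deterministic \<open>r\<^sub>N\<close> is the
  supremum of the quantile errors over all admissible \<open>G\<^sub>N\<close>.\<close>

lemma gen_inv_bounds:
  assumes "0 \<le> z" "u \<le> F z"
  shows "0 \<le> gen_inv F u" "gen_inv F u \<le> z"
proof -
  have "{x. 0 \<le> x \<and> u \<le> F x} \<noteq> {}" using assms by auto
  then show "0 \<le> gen_inv F u" unfolding gen_inv_def by (rule cInf_greatest) auto
  show "gen_inv F u \<le> z" unfolding gen_inv_def
    by (rule cInf_lower) (use assms in \<open>auto intro: bdd_belowI[of _ 0]\<close>)
qed

lemma gen_inv_zero: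
  assumes "\<And>x. 0 \<le> x \<Longrightarrow> 0 \<le> F x"
  shows "gen_inv F 0 = 0"
proof -
  have "{x. 0 \<le> x \<and> 0 \<le> F x} = {0..}" using assms by auto
  then show ?thesis by (simp add: gen_inv_def)
qed

text \<open>Nothing is known about the growth of \<open>G\<close> beyond \<open>L\<close>, so the upper bound needs either
  room to the right of the quantile or \<open>F\<close> to have reached level \<open>u\<close> at \<open>L\<close>.\<close>
lemma gen_inv_perturb_upper:
  fixes F G :: "real \<Rightarrow> real"
  assumes u: "0 < u" and h: "0 < h" and L: "0 \<le> L"
    and G0: "\<And>x. x \<le> a \<Longrightarrow> G x = 0"
    and incr: "\<And>x. a \<le> x \<Longrightarrow> x + h \<le> L \<Longrightarrow> G x + \<eta> \<le> G (x + h)"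
    and close: "\<And>x. 0 \<le> x \<Longrightarrow> G x - \<eta> \<le> F x"
    and G_reaches: "\<exists>x\<ge>0. u \<le> G x"
    and top: "gen_inv G u + 2*h \<le> L \<or> (\<forall>x\<ge>L. u \<le> F x)"
  obtains z where "0 \<le> z" "u \<le> F z" "z \<le> gen_inv G u + 2*h"
proof -
  have "{x. 0 \<le> x \<and> u \<le> G x} \<noteq> {}" using G_reaches by auto
  moreover have "Inf {x. 0 \<le> x \<and> u \<le> G x} < gen_inv G u + h"
    using h by (simp add: gen_inv_def)
  ultimately have "\<exists>z'\<in>{x. 0 \<le> x \<and> u \<le> G x}. z' < gen_inv G u + h"
    by (rule cInf_lessD)
  then obtain z' where z': "0 \<le> z'" "u \<le> G z'" "z' < gen_inv G u + h"
    by blast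
  have "a < z'"
  proof (rule ccontr)
    assume "\<not> a < z'"
    then have "G z' = 0" by (intro G0) simp
    with z'(2) u show False by simp
  qed
  show ?thesis
  proof (cases "z' + h \<le> L")
    case True
    have "u \<le> F (z' + h)"
      using incr[of z'] close[of "z' + h"] z'(1,2) h True \<open>a < z'\<close> by simp
    with True z' h show ?thesis by (intro that[of "z' + h"]) simp_all
  next
    case False
    then have "\<forall>x\<ge>L. u \<le> F x" using top z'(3) by auto
    with False z'(3) L show ?thesis by (intro that[of L]) simp_all
  qed
qed

lemma gen_inv_perturb_lower:
  fixes F G :: "real \<Rightarrow> real"
  assumes u: "0 < u" and h: "0 < h" and L: "gen_inv G u \<le> L"
    and F0: "\<And>x. x \<le> a \<Longrightarrow> F x = 0"
    and incr: "\<And>x. a \<le> x \<Longrightarrow> x + h \<le> L \<Longrightarrow> G x + \<eta> \<le> G (x + h)"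
    and close: "\<And>x. 0 \<le> x \<Longrightarrow> F x \<le> G x + \<eta>"
    and F_reaches: "\<exists>x\<ge>0. u \<le> F x"
  shows "gen_inv G u - h \<le> gen_inv F u"
  unfolding gen_inv_def[of F]
proof (rule cInf_greatest)
  show "{x. 0 \<le> x \<and> u \<le> F x} \<noteq> {}" using F_reaches by auto
next
  fix x assume x: "x \<in> {x. 0 \<le> x \<and> u \<le> F x}"
  show "gen_inv G u - h \<le> x"
  proof (rule ccontr)
    assume "\<not> ?thesis"
    then have below: "x + h < gen_inv G u" by simp
    have "a < x"
    proof (rule ccontr)
      assume "\<not> a < x"
      then have "F x = 0" by (intro F0) simp
      with x u show False by simp
    qed
    have "G (x + h) < u"
    proof (rule ccontr)
      assume "\<not> G (x + h) < u"
      then have "gen_inv G u \<le> x + h" using x h by (intro gen_inv_bounds(2)) simp_all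
      with below show False by simp
    qed
    moreover have "G x + \<eta> \<le> G (x + h)" using incr[of x] \<open>a < x\<close> below L by auto
    ultimately show False using close[of x] x by auto
  qed
qed

lemma gen_inv_perturb:
  fixes F G :: "real \<Rightarrow> real"
  assumes u: "0 < u" and h: "0 < h"
    and F0: "\<And>x. x \<le> a \<Longrightarrow> F x = 0" and G0: "\<And>x. x \<le> a \<Longrightarrow> G x = 0"
    and incr: "\<And>x. a \<le> x \<Longrightarrow> x + h \<le> L \<Longrightarrow> G x + \<eta> \<le> G (x + h)"
    and close: "\<And>x. 0 \<le> x \<Longrightarrow> \<bar>F x - G x\<bar> \<le> \<eta>"
    and G_reaches: "\<exists>x\<ge>0. u \<le> G x" and L: "gen_inv G u \<le> L"
    and top: "gen_inv G u + 2*h \<le> L \<or> (\<forall>x\<ge>L. u \<le> F x)"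
  shows "\<bar>gen_inv F u - gen_inv G u\<bar> \<le> 2*h"
proof -
  have F_lower: "G x - \<eta> \<le> F x" and F_upper: "F x \<le> G x + \<eta>" if "0 \<le> x" for x
    using close[OF that] by linarith+
  have "0 \<le> L" using G_reaches gen_inv_bounds(1) L by (blast intro: order_trans)
  then obtain z where z: "0 \<le> z" "u \<le> F z" "z \<le> gen_inv G u + 2*h"
    using gen_inv_perturb_upper[OF u h _ G0 incr F_lower G_reaches top] by blast
  have "gen_inv F u \<le> gen_inv G u + 2*h" using gen_inv_bounds(2)[of z u F] z by simp
  moreover have "gen_inv G u - h \<le> gen_inv F u"
    using gen_inv_perturb_lower[OF u h L F0 incr F_upper] z(1,2) by blast
  ultimately show ?thesis using h by simp
qed

lemma uniform_eventual_bound_tendsto_zero: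
  fixes f :: "'a \<Rightarrow> real"
  assumes "\<And>\<delta>. 0 < \<delta> \<Longrightarrow> eventually (\<lambda>N. \<forall>z. P N z \<longrightarrow> f z \<le> \<delta>) sequentially"
  obtains r where "r \<longlonglongrightarrow> 0"
    and "\<And>N z. P N z \<Longrightarrow> bdd_above (f ` Collect (P N)) \<Longrightarrow> f z \<le> r N"
proof -
  define r where "r N = (if bdd_above (f ` Collect (P N))
                         then Sup (insert 0 (f ` Collect (P N))) else 0)" for N
  have r_nonneg: "0 \<le> r N" for N by (auto simp: r_def intro!: cSup_upper)
  have "r \<longlonglongrightarrow> 0"
  proof (rule order_tendstoI)
    fix e :: real assume "e < 0"
    with r_nonneg show "eventually (\<lambda>N. e < r N) sequentially"
      by (auto intro!: always_eventually intro: less_le_trans)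
  next
    fix e :: real assume e: "0 < e"
    then have "eventually (\<lambda>N. \<forall>z. P N z \<longrightarrow> f z \<le> e/2) sequentially" by (intro assms) simp
    then show "eventually (\<lambda>N. r N < e) sequentially"
    proof eventually_elim
      case (elim N)
      have "r N \<le> e/2"
      proof (cases "bdd_above (f ` Collect (P N))")
        case True
        have "Sup (insert 0 (f ` Collect (P N))) \<le> e/2"
          by (rule cSup_least) (use elim e in auto)
        with True show ?thesis by (simp add: r_def)
      qed (use e in \<open>simp add: r_def\<close>)
      with e show ?case by simp
    qed
  qed
  moreover have "f z \<le> r N" if "P N z" "bdd_above (f ` Collect (P N))" for N z
    using that by (auto simp: r_def intro!: cSup_upper)
  ultimately show ?thesis by (rule that)
qed

lemma powr_smallo_powr_sequentially:
  fixes p q :: real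
  assumes "p < q"
  shows "(\<lambda>N. real N powr p) \<in> o(\<lambda>N. real N powr q)"
proof (rule smalloI_tendsto)
  have "(\<lambda>N. real N powr (p - q)) \<longlonglongrightarrow> 0"
    using assms by (intro tendsto_neg_powr filterlim_real_sequentially) simp
  moreover have "eventually (\<lambda>N. real N powr (p - q) = real N powr p / real N powr q) sequentially"
    using eventually_gt_at_top[of "0::nat"] by eventually_elim (simp add: powr_diff)
  ultimately show "(\<lambda>N. real N powr p / real N powr q) \<longlonglongrightarrow> 0"
    by (rule Lim_transform_eventually)
  show "eventually (\<lambda>N. real N powr q \<noteq> 0) sequentially"
    using eventually_gt_at_top[of "0::nat"] by eventually_elim simp
qed

lemma bigo_powr_tendsto_zero:
  fixes f :: "nat \<Rightarrow> real"
  assumes "f \<in> O(\<lambda>N. real N powr p)" "p < 0"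
  shows "f \<longlonglongrightarrow> 0"
proof -
  obtain C where "eventually (\<lambda>N. norm (f N) \<le> C * norm (real N powr p)) sequentially"
    using assms(1) by (elim landau_o.bigE)
  moreover have "(\<lambda>N. C * norm (real N powr p)) \<longlonglongrightarrow> 0"
    using assms(2) by (auto intro!: tendsto_mult_right_zero tendsto_neg_powr filterlim_real_sequentially)
  ultimately show ?thesis by (rule Lim_null_comparison)
qed

text \<open>Since \<open>d \<le> 1 \<le> N\<^sup>\<beta>\<^sup>/\<^sup>\<gamma>\<close>, the tail bound \<open>k (N\<^sup>\<beta>\<^sup>/\<^sup>\<gamma> + d)\<^sup>-\<^sup>\<gamma>\<close> is at least
  \<open>k 2\<^sup>-\<^sup>\<gamma> N\<^sup>-\<^sup>\<beta>\<close>, which eventually dominates \<open>eps N\<close>.\<close>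
lemma smallo_powr_eventually_le_tail_mass:
  fixes eps :: "nat \<Rightarrow> real"
  assumes eps: "eps \<in> o(\<lambda>N. real N powr -\<beta>)"
    and "0 < \<beta>" "0 < \<gamma>" "0 < c" "0 < k" "0 < d" "d \<le> 1"
  shows "eventually (\<lambda>N. \<bar>eps N\<bar> \<le> min c (k * (real N powr (\<beta>/\<gamma>) + d) powr -\<gamma>))
           sequentially"
proof -
  have "eventually (\<lambda>N. \<bar>eps N\<bar> \<le> c * \<bar>real N powr -\<beta>\<bar>) sequentially"
    using landau_o.smallD[OF eps \<open>0 < c\<close>] by simp
  moreover have "eventually (\<lambda>N. \<bar>eps N\<bar> \<le> (k * 2 powr -\<gamma>) * \<bar>real N powr -\<beta>\<bar>) sequentially"
    using landau_o.smallD[OF eps, of "k * 2 powr -\<gamma>"] \<open>0 < k\<close> by simp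
  moreover have "eventually (\<lambda>N. 1 \<le> N) sequentially" by (rule eventually_ge_at_top)
  ultimately show ?thesis
  proof eventually_elim
    case (elim N)
    define X where "X = real N powr (\<beta>/\<gamma>)"
    have X: "1 \<le> X" using elim(3) assms(2,3) by (simp add: X_def ge_one_powr_ge_zero)
    have "1 \<le> real N powr \<beta>" using elim(3) assms(2) by (simp add: ge_one_powr_ge_zero)
    then have small: "real N powr -\<beta> \<le> 1" by (simp add: powr_minus inverse_le_1_iff)
    have "(2 * X) powr -\<gamma> = 2 powr -\<gamma> * real N powr -\<beta>"
      using assms(3) by (simp add: X_def powr_mult powr_powr)
    moreover have "(2 * X) powr -\<gamma> \<le> (X + d) powr -\<gamma>"
      using X assms(3,6,7) by (intro powr_mono2') auto
    ultimately have "k * 2 powr -\<gamma> * real N powr -\<beta> \<le> k * (X + d) powr -\<gamma>"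
      using assms(5) by (simp add: mult.assoc)
    moreover have "c * real N powr -\<beta> \<le> c" using small assms(4) by simp
    ultimately show ?case using elim(1,2) by (simp add: X_def)
  qed
qed

locale lower_density_distribution = real_distribution \<mu> for \<mu> :: "real measure" +
  fixes a :: real and b :: ereal and g :: "real \<Rightarrow> real"
  assumes a_nonneg: "0 \<le> a" and a_less_b: "ereal a < b"
    and null_outside: "measure \<mu> (- {x. a < x \<and> ereal x < b}) = 0"
    and g_cont: "continuous_on {x. a < x \<and> ereal x < b} g"
    and g_pos: "\<And>x. a < x \<Longrightarrow> ereal x < b \<Longrightarrow> 0 < g x"
    and density_ge: "\<And>A. A \<in> sets borel \<Longrightarrow> A \<subseteq> {x. a < x \<and> ereal x < b} \<Longrightarrow>
                       (\<integral>\<^sup>+ x \<in> A. ennreal (g x) \<partial>lborel) \<le> emeasure \<mu> A"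
begin

lemma support_measurable: "{x. a < x \<and> ereal x < b} \<in> sets borel"
  by measurable

lemma cdf_eq_0:
  assumes "x \<le> a"
  shows "cdf \<mu> x = 0"
proof -
  have "cdf \<mu> x \<le> measure \<mu> (- {x. a < x \<and> ereal x < b})"
    unfolding cdf_def using assms support_measurable by (intro finite_measure_mono) auto
  with null_outside cdf_nonneg[of x] show ?thesis by simp
qed

lemma cdf_eq_1:
  assumes "b = ereal B" "B \<le> x"
  shows "cdf \<mu> x = 1"
proof -
  have "measure \<mu> (UNIV - {..x}) \<le> measure \<mu> (- {x. a < x \<and> ereal x < b})"
    using assms support_measurable by (intro finite_measure_mono) auto
  then have "measure \<mu> (UNIV - {..x}) = 0" using null_outside by (simp add: measure_nonneg antisym)
  with prob_compl[of "{..x}"] show ?thesis by (simp add: cdf_def)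
qed

lemma cdf_reaches:
  assumes "u < 1"
  obtains x where "0 \<le> x" "u \<le> cdf \<mu> x"
proof -
  have "eventually (\<lambda>x. u < cdf \<mu> x) at_top"
    using order_tendstoD(1)[OF cdf_lim_at_top_prob assms] .
  then obtain X where "\<And>x. X \<le> x \<Longrightarrow> u < cdf \<mu> x" by (auto simp: eventually_at_top_linorder)
  then show ?thesis by (intro that[of "max X 0"]) (auto intro: less_imp_le)
qed

lemma g_bounded_below:
  assumes "a < p" "ereal q < b"
  obtains c where "0 < c" "\<And>y. y \<in> {p..q} \<Longrightarrow> c \<le> g y"
proof (cases "p \<le> q")
  case True
  have sub: "{p..q} \<subseteq> {x. a < x \<and> ereal x < b}"
    using assms by auto (meson ereal_less_eq(3) le_less_trans)
  then have "continuous_on {p..q} g" using g_cont continuous_on_subset by blast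
  then obtain y0 where "y0 \<in> {p..q}" "\<And>y. y \<in> {p..q} \<Longrightarrow> g y0 \<le> g y"
    using continuous_attains_inf[of "{p..q}" g] True by auto
  with sub g_pos show ?thesis by (intro that[of "g y0"]) auto
next
  case False
  then show ?thesis by (intro that[of 1]) auto
qed

lemma cdf_increment_ge:
  assumes "a < s" "s < t" "ereal t < b" "\<And>y. y \<in> {s..t} \<Longrightarrow> c \<le> g y" "0 \<le> c"
  shows "cdf \<mu> s + c * (t - s) \<le> cdf \<mu> t"
proof -
  have sub: "{s<..t} \<subseteq> {x. a < x \<and> ereal x < b}"
    using assms(1,3) by auto (meson ereal_less_eq(3) le_less_trans)
  have "ennreal (c * (t - s)) = (\<integral>\<^sup>+ x. ennreal c * indicator {s<..t} x \<partial>lborel)"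
    using assms(2,5) by (simp add: nn_integral_cmult_indicator ennreal_mult)
  also have "\<dots> \<le> (\<integral>\<^sup>+ x \<in> {s<..t}. ennreal (g x) \<partial>lborel)"
    by (rule nn_integral_mono) (use assms(4) in \<open>auto simp: indicator_def intro!: ennreal_leI\<close>)
  also have "\<dots> \<le> emeasure \<mu> {s<..t}" using density_ge sub by simp
  also have "\<dots> = ennreal (measure \<mu> {s<..t})" by (simp add: emeasure_eq_measure)
  finally have "c * (t - s) \<le> measure \<mu> {s<..t}"
    using assms(2,5) by (simp add: ennreal_le_iff)
  with cdf_diff_eq[OF assms(2)] show ?thesis by simp
qed

text \<open>The window is shrunk by \<open>h\<close> on both sides because \<open>g\<close> is bounded below only on
  compact subintervals of the open support.\<close>
lemma cdf_window_increment:
  assumes "0 < h" "a \<le> x" "x + 3*h \<le> L" "ereal (L - h) < b"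
    and "\<And>y. y \<in> {a+h..L-h} \<Longrightarrow> c \<le> g y" "0 \<le> c"
  shows "cdf \<mu> x + c * h \<le> cdf \<mu> (x + 3*h)"
proof -
  have "x + 2*h \<le> L - h" using assms(3) by simp
  with assms(4) have "ereal (x + 2*h) < b" by (meson ereal_less_eq(3) le_less_trans)
  then have "cdf \<mu> (x + h) + c * ((x + 2*h) - (x + h)) \<le> cdf \<mu> (x + 2*h)"
    using assms by (intro cdf_increment_ge) auto
  moreover have "cdf \<mu> x \<le> cdf \<mu> (x + h)" "cdf \<mu> (x + 2*h) \<le> cdf \<mu> (x + 3*h)"
    using assms(1) by (auto intro: cdf_nondecreasing)
  ultimately show ?thesis by simp
qed

definition near_cdf :: "real \<Rightarrow> (real \<Rightarrow> real) \<Rightarrow> bool" where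
  "near_cdf \<eta> F \<longleftrightarrow> is_distribution_function F \<and> (\<forall>x\<le>a. F x = 0) \<and>
                     (\<forall>x\<ge>0. \<bar>F x - cdf \<mu> x\<bar> \<le> \<eta>)"

lemma near_cdf_nonneg:
  assumes "near_cdf \<eta> F"
  shows "0 \<le> F x"
proof (cases "x \<le> a")
  case False
  have "mono F" using assms by (simp add: near_cdf_def is_distribution_function_def)
  with False have "F a \<le> F x" by (simp add: monoD)
  with assms show ?thesis by (simp add: near_cdf_def)
qed (use assms in \<open>simp add: near_cdf_def\<close>)

lemma quantile_error_le:
  assumes F: "near_cdf \<eta> F" and u: "0 \<le> u" and h: "0 < h"
    and reaches: "\<exists>x\<ge>0. u \<le> cdf \<mu> x"
    and incr: "\<And>x. a \<le> x \<Longrightarrow> x + h \<le> L \<Longrightarrow> cdf \<mu> x + \<eta> \<le> cdf \<mu> (x + h)"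
    and L: "gen_inv (cdf \<mu>) u \<le> L"
    and top: "gen_inv (cdf \<mu>) u + 2*h \<le> L \<or> (\<forall>x\<ge>L. u \<le> F x)"
  shows "\<bar>gen_inv F u - gen_inv (cdf \<mu>) u\<bar> \<le> 2*h"
proof (cases "u = 0")
  case True
  then show ?thesis
    using h near_cdf_nonneg[OF F] by (simp add: gen_inv_zero cdf_nonneg)
next
  case False
  with u have "0 < u" by simp
  from gen_inv_perturb[OF this h _ cdf_eq_0 incr _ reaches L top] F show ?thesis
    by (simp add: near_cdf_def)
qed

lemma quantile_error_eventually_le_bounded:
  assumes B: "b = ereal B" and eps: "eps \<longlonglongrightarrow> 0" and \<delta>: "0 < \<delta>"
  shows "eventually (\<lambda>N. \<forall>F (u::real). near_cdf (eps N) F \<and> (\<forall>x\<ge>B. F x = 1) \<and> u \<in> {0..1} \<longrightarrow>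
           \<bar>gen_inv F u - gen_inv (cdf \<mu>) u\<bar> \<le> \<delta>) sequentially"
proof -
  define w where "w = \<delta>/6"
  have w: "0 < w" using \<delta> by (simp add: w_def)
  have B0: "0 \<le> B" using a_nonneg a_less_b B by simp
  have Bw: "ereal (B - w) < b" using B w by simp
  obtain c where c: "0 < c" "\<And>y. y \<in> {a+w..B-w} \<Longrightarrow> c \<le> g y"
    using g_bounded_below[of "a + w" "B - w"] w Bw by auto
  have "eventually (\<lambda>N. \<bar>eps N\<bar> < c * w) sequentially"
    using order_tendstoD(2)[OF tendsto_rabs_zero[OF eps]] c w by simp
  then show ?thesis
  proof eventually_elim
    case (elim N)
    show ?case
    proof (intro allI impI)
      fix F and u :: real assume Fu: "near_cdf (eps N) F \<and> (\<forall>x\<ge>B. F x = 1) \<and> u \<in> {0..1}"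
      have "\<bar>gen_inv F u - gen_inv (cdf \<mu>) u\<bar> \<le> 2 * (3*w)"
      proof (rule quantile_error_le[where L = B])
        show "cdf \<mu> x + eps N \<le> cdf \<mu> (x + 3*w)" if "a \<le> x" "x + 3*w \<le> B" for x
          using cdf_window_increment[OF w that Bw c(2) less_imp_le[OF c(1)]] elim by linarith
        show "gen_inv (cdf \<mu>) u \<le> B"
          using gen_inv_bounds(2)[of B u] cdf_eq_1[OF B order_refl] B0 Fu by simp
        show "\<exists>x\<ge>0. u \<le> cdf \<mu> x" using cdf_eq_1[OF B order_refl] B0 Fu by auto
      qed (use Fu w in auto)
      then show "\<bar>gen_inv F u - gen_inv (cdf \<mu>) u\<bar> \<le> \<delta>" by (simp add: w_def)
    qed
  qed
qed

lemma quantile_error_le_support_bound: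
  assumes B: "b = ereal B" and "near_cdf \<eta> F" "\<forall>x\<ge>B. F x = 1" "(u::real) \<in> {0..1}"
  shows "\<bar>gen_inv F u - gen_inv (cdf \<mu>) u\<bar> \<le> B"
proof -
  have "0 \<le> B" using a_nonneg a_less_b B by simp
  then have "0 \<le> gen_inv F u" "gen_inv F u \<le> B"
    "0 \<le> gen_inv (cdf \<mu>) u" "gen_inv (cdf \<mu>) u \<le> B"
    using gen_inv_bounds[of B u] cdf_eq_1[OF B order_refl] assms(3,4) by auto
  then show ?thesis by linarith
qed

lemma quantile_uniform_convergence_bounded:
  assumes b: "b \<noteq> \<infinity>" and eps: "eps \<longlonglongrightarrow> 0"
  shows "\<exists>r. r \<longlonglongrightarrow> 0 \<and>
           (\<forall>N F. is_distribution_function F \<and> (\<forall>x\<le>a. F x = 0) \<and> (\<forall>x\<ge>real_of_ereal b. F x = 1) \<and>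
                  (\<forall>x\<ge>0. \<bar>F x - cdf \<mu> x\<bar> \<le> eps N) \<longrightarrow>
              (\<forall>u\<in>{0..1}. \<bar>gen_inv F u - gen_inv (cdf \<mu>) u\<bar> \<le> r N))"
proof -
  obtain B where B: "b = ereal B" using b a_less_b by (cases b) auto
  define P where "P N = (\<lambda>(F, u::real). near_cdf (eps N) F \<and> (\<forall>x\<ge>B. F x = 1) \<and> u \<in> {0..1})"
    for N
  define err where "err = (\<lambda>(F, u). \<bar>gen_inv F u - gen_inv (cdf \<mu>) u\<bar>)"
  have ev: "eventually (\<lambda>N. \<forall>z. P N z \<longrightarrow> err z \<le> \<delta>) sequentially" if "0 < \<delta>" for \<delta>
    using quantile_error_eventually_le_bounded[OF B eps that]
    by (simp add: P_def err_def split_paired_All)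
  obtain r where r: "r \<longlonglongrightarrow> 0"
    "\<And>N z. P N z \<Longrightarrow> bdd_above (err ` Collect (P N)) \<Longrightarrow> err z \<le> r N"
    using uniform_eventual_bound_tendsto_zero[OF ev] by blast
  have "bdd_above (err ` Collect (P N))" for N
    by (rule bdd_aboveI[of _ B]) (auto simp: P_def err_def intro: quantile_error_le_support_bound[OF B])
  then have "\<bar>gen_inv F u - gen_inv (cdf \<mu>) u\<bar> \<le> r N"
    if "near_cdf (eps N) F" "\<forall>x\<ge>B. F x = 1" "u \<in> {0..1}" for N F u
    using r(2)[of N "(F, u)"] that by (simp add: P_def err_def)
  with r(1) show ?thesis by (intro exI[of _ r]) (auto simp: B near_cdf_def)
qed

lemma g_ge_min_tail:
  assumes tail: "a < t0" "0 < k" "0 < \<gamma>" "\<And>x. t0 \<le> x \<Longrightarrow> k * x powr -\<gamma> \<le> g x"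
    and c1: "\<And>y. y \<in> {p..t0} \<Longrightarrow> c1 \<le> g y" and y: "p \<le> y" "y \<le> L"
  shows "min c1 (k * L powr -\<gamma>) \<le> g y"
proof (cases "y \<le> t0")
  case True
  with y c1[of y] show ?thesis by simp
next
  case False
  then have "0 < y" using tail(1) a_nonneg by simp
  with y tail(3) have "L powr -\<gamma> \<le> y powr -\<gamma>" by (intro powr_mono2') auto
  with tail(2) have "k * L powr -\<gamma> \<le> k * y powr -\<gamma>" by simp
  also have "\<dots> \<le> g y" using tail(4) False by simp
  finally show ?thesis by simp
qed

lemma quantile_error_eventually_le_unbounded:
  assumes b: "b = \<infinity>"
    and tail: "a < t0" "0 < k" "0 < \<gamma>" "\<And>x. t0 \<le> x \<Longrightarrow> k * x powr -\<gamma> \<le> g x"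
    and eps: "eps \<in> o(\<lambda>N. real N powr -\<beta>)" "0 < \<beta>" and \<delta>: "0 < \<delta>"
  shows "eventually (\<lambda>N. \<forall>F u. near_cdf (eps N) F \<and> 0 \<le> u \<and> u < 1 \<and>
            gen_inv (cdf \<mu>) u \<le> real N powr (\<beta>/\<gamma>) \<longrightarrow>
            \<bar>gen_inv F u - gen_inv (cdf \<mu>) u\<bar> \<le> \<delta>) sequentially"
proof -
  define d where "d = min \<delta> 1"
  define w where "w = d/6"
  have d: "0 < d" "d \<le> 1" "d \<le> \<delta>" and w: "0 < w" using \<delta> by (auto simp: d_def w_def)
  obtain c1 where c1: "0 < c1" "\<And>y. y \<in> {a+w..t0} \<Longrightarrow> c1 \<le> g y"
    using g_bounded_below[of "a + w" t0] w b by auto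
  have "eventually (\<lambda>N. \<bar>eps N\<bar> \<le> min (w * c1) ((w * k) * (real N powr (\<beta>/\<gamma>) + d) powr -\<gamma>))
          sequentially"
    using w c1(1) tail(2) d by (intro smallo_powr_eventually_le_tail_mass[OF eps tail(3)]) auto
  then show ?thesis
  proof eventually_elim
    case (elim N)
    define L where "L = real N powr (\<beta>/\<gamma>) + d"
    define c where "c = min c1 (k * L powr -\<gamma>)"
    have c: "0 \<le> c" using c1(1) tail(2) by (simp add: c_def)
    have "c * w = w * min c1 (k * L powr -\<gamma>)" by (simp add: c_def mult.commute)
    also have "\<dots> = min (w * c1) ((w * k) * L powr -\<gamma>)"
      using w by (simp add: min_mult_distrib_left mult.assoc)
    finally have eps_le: "\<bar>eps N\<bar> \<le> c * w" using elim by (simp add: L_def)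
    show ?case
    proof (intro allI impI)
      fix F and u :: real
      assume Fu: "near_cdf (eps N) F \<and> 0 \<le> u \<and> u < 1 \<and> gen_inv (cdf \<mu>) u \<le> real N powr (\<beta>/\<gamma>)"
      have "\<bar>gen_inv F u - gen_inv (cdf \<mu>) u\<bar> \<le> 2 * (3*w)"
      proof (rule quantile_error_le[where L = L])
        show "cdf \<mu> x + eps N \<le> cdf \<mu> (x + 3*w)" if "a \<le> x" "x + 3*w \<le> L" for x
        proof -
          have "cdf \<mu> x + c * w \<le> cdf \<mu> (x + 3*w)"
            using b g_ge_min_tail[OF tail, where p = "a + w" and L = L] c1(2) c w
            by (intro cdf_window_increment[OF w that]) (auto simp: c_def)
          with eps_le show ?thesis by linarith
        qed
        show "\<exists>x\<ge>0. u \<le> cdf \<mu> x" using cdf_reaches[of u] Fu by blast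
      qed (use Fu d in \<open>auto simp: L_def w_def\<close>)
      then show "\<bar>gen_inv F u - gen_inv (cdf \<mu>) u\<bar> \<le> \<delta>" using d by (simp add: w_def)
    qed
  qed
qed

lemma quantile_uniform_bound_unbounded:
  assumes b: "b = \<infinity>"
    and tail: "a < t0" "0 < k" "0 < \<gamma>" "\<And>x. t0 \<le> x \<Longrightarrow> k * x powr -\<gamma> \<le> g x"
    and eps: "eps \<in> o(\<lambda>N. real N powr -\<beta>)" "0 < \<beta>"
  obtains xN r where "eventually (\<lambda>N. xN N = real N powr (\<beta>/\<gamma>)) sequentially" and "r \<longlonglongrightarrow> 0"
    and "\<And>N F u. near_cdf (eps N) F \<Longrightarrow> 0 \<le> u \<Longrightarrow> u < 1 \<Longrightarrow> gen_inv (cdf \<mu>) u \<le> xN N \<Longrightarrow>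
           \<bar>gen_inv F u - gen_inv (cdf \<mu>) u\<bar> \<le> r N"
proof -
  define P where "P N = (\<lambda>(F, u). near_cdf (eps N) F \<and> 0 \<le> u \<and> u < 1 \<and>
                          gen_inv (cdf \<mu>) u \<le> real N powr (\<beta>/\<gamma>))" for N
  define err where "err = (\<lambda>(F, u). \<bar>gen_inv F u - gen_inv (cdf \<mu>) u\<bar>)"
  have ev: "eventually (\<lambda>N. \<forall>z. P N z \<longrightarrow> err z \<le> \<delta>) sequentially" if "0 < \<delta>" for \<delta>
    using quantile_error_eventually_le_unbounded[OF assms that]
    by (simp add: P_def err_def split_paired_All)
  obtain r where r: "r \<longlonglongrightarrow> 0"
    "\<And>N z. P N z \<Longrightarrow> bdd_above (err ` Collect (P N)) \<Longrightarrow> err z \<le> r N"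
    using uniform_eventual_bound_tendsto_zero[OF ev] by blast
  text \<open>For the finitely many \<open>N\<close> where the errors may be unbounded, the constraint
    \<open>gen_inv (cdf \<mu>) u \<le> xN N\<close> is made unsatisfiable.\<close>
  define xN where "xN N = (if bdd_above (err ` Collect (P N)) then real N powr (\<beta>/\<gamma>) else -1)" for N
  have "eventually (\<lambda>N. bdd_above (err ` Collect (P N))) sequentially"
    using ev[OF zero_less_one] by eventually_elim (rule bdd_aboveI[of _ 1], auto)
  then have "eventually (\<lambda>N. xN N = real N powr (\<beta>/\<gamma>)) sequentially"
    by eventually_elim (simp add: xN_def)
  moreover have "\<bar>gen_inv F u - gen_inv (cdf \<mu>) u\<bar> \<le> r N"
    if F: "near_cdf (eps N) F" and u: "0 \<le> u" "u < 1" and uN: "gen_inv (cdf \<mu>) u \<le> xN N" for N F u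
  proof -
    obtain x where "0 \<le> x" "u \<le> cdf \<mu> x" using cdf_reaches[OF u(2)] .
    then have "0 \<le> gen_inv (cdf \<mu>) u" by (rule gen_inv_bounds)
    with uN have bdd: "bdd_above (err ` Collect (P N))" by (auto simp: xN_def split: if_splits)
    with F u uN have "P N (F, u)" by (simp add: P_def xN_def)
    with bdd show ?thesis using r(2)[of N "(F, u)"] by (simp add: err_def)
  qed
  ultimately show ?thesis using r(1) that by blast
qed

lemma quantile_uniform_convergence_unbounded:
  assumes b: "b = \<infinity>"
    and tail: "\<exists>t0 k \<gamma>. a < t0 \<and> 0 < k \<and> 0 < \<gamma> \<and> (\<forall>x\<ge>t0. k * x powr -\<gamma> \<le> g x)"
    and eps: "eps \<in> o(\<lambda>N. real N powr -\<beta>)" "0 < \<beta>"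
  shows "\<exists>\<alpha>>0. \<exists>xN r. (\<exists>c>0. eventually (\<lambda>N. real N powr (-\<alpha>) * xN N \<ge> c) sequentially) \<and>
           r \<longlonglongrightarrow> 0 \<and>
           (\<forall>N F. is_distribution_function F \<and> (\<forall>x\<le>a. F x = 0) \<and> (\<forall>x\<ge>0. \<bar>F x - cdf \<mu> x\<bar> \<le> eps N) \<longrightarrow>
              (\<forall>u. 0 \<le> u \<and> u < 1 \<and> gen_inv (cdf \<mu>) u \<le> xN N \<longrightarrow>
                  \<bar>gen_inv F u - gen_inv (cdf \<mu>) u\<bar> \<le> r N))"
proof -
  obtain t0 k \<gamma> where t0: "a < t0" "0 < k" "0 < \<gamma>" "\<And>x. t0 \<le> x \<Longrightarrow> k * x powr -\<gamma> \<le> g x"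
    using tail by blast
  obtain xN r where xN: "eventually (\<lambda>N. xN N = real N powr (\<beta>/\<gamma>)) sequentially"
    and r: "r \<longlonglongrightarrow> 0" and bound: "\<And>N F u. near_cdf (eps N) F \<Longrightarrow> 0 \<le> u \<Longrightarrow> u < 1 \<Longrightarrow>
      gen_inv (cdf \<mu>) u \<le> xN N \<Longrightarrow> \<bar>gen_inv F u - gen_inv (cdf \<mu>) u\<bar> \<le> r N"
    using quantile_uniform_bound_unbounded[OF b t0 eps] by blast
  have "eventually (\<lambda>N. 1 \<le> real N powr -(\<beta>/\<gamma>) * xN N) sequentially"
    using xN eventually_ge_at_top[of "1::nat"]
    by eventually_elim (simp add: powr_add[symmetric])
  moreover have "0 < \<beta>/\<gamma>" using eps(2) t0(3) by simp
  ultimately show ?thesis using r bound unfolding near_cdf_def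
    by (intro exI[of _ "\<beta>/\<gamma>"] exI[of _ xN] exI[of _ r] conjI exI[of _ 1]) auto
qed

end

lemma assumption2_lower_density_distribution:
  assumes A2: "assumption2 \<mu> a b"
  obtains g where "lower_density_distribution \<mu> a b g"
    and "b = \<infinity> \<Longrightarrow> \<exists>t0 k \<gamma>. a < t0 \<and> 0 < k \<and> 0 < \<gamma> \<and> (\<forall>x\<ge>t0. k * x powr -\<gamma> \<le> g x)"
proof -
  have law: "prob_space \<mu>" "sets \<mu> = sets borel" "0 \<le> a" "ereal a < b"
    "measure \<mu> (- {x. a < x \<and> ereal x < b}) = 0"
    using A2 by (simp_all add: assumption2_def)
  obtain g where g_cont: "continuous_on {x. a < x \<and> ereal x < b} g"
    and g_pos: "\<forall>x. a < x \<and> ereal x < b \<longrightarrow> g x > 0"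
    and density_ge: "\<forall>A \<in> sets borel. A \<subseteq> {x. a < x \<and> ereal x < b} \<longrightarrow>
                       emeasure \<mu> A \<ge> (\<integral>\<^sup>+ x \<in> A. ennreal (g x) \<partial>lborel)"
    and tail: "b = \<infinity> \<longrightarrow> (\<exists>x0 k \<gamma>. x0 > a \<and> k > 0 \<and> \<gamma> > 3 \<and> (\<forall>x \<ge> x0. g x \<ge> k * x powr (-\<gamma>)))"
    using A2 unfolding assumption2_def by (elim conjE exE) (rule that)
  have "lower_density_distribution \<mu> a b g"
    using law g_cont g_pos density_ge
    by (simp add: lower_density_distribution_def lower_density_distribution_axioms_def
                  real_distribution_def real_distribution_axioms_def)
  moreover have "\<exists>t0 k \<gamma>. a < t0 \<and> 0 < k \<and> 0 < \<gamma> \<and> (\<forall>x\<ge>t0. k * x powr -\<gamma> \<le> g x)"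
    if binf: "b = \<infinity>"
  proof -
    obtain t0 k \<gamma> where "a < t0" "0 < k" "3 < \<gamma>" "\<forall>x\<ge>t0. k * x powr -\<gamma> \<le> g x"
      using tail binf by auto
    then show ?thesis by (intro exI[of _ t0] exI[of _ k] exI[of _ \<gamma>]) simp
  qed
  ultimately show ?thesis by (rule that)
qed

theorem corollary2p3:
  fixes \<mu> :: "real measure" and a :: real and b :: ereal and eps :: "nat \<Rightarrow> real"
  assumes A2: "assumption2 \<mu> a b"
    and eps: "eps \<in> O(\<lambda>N. real N powr (-1/6))"
  shows "(b \<noteq> \<infinity> \<longrightarrow>
           (\<exists>r :: nat \<Rightarrow> real. r \<longlonglongrightarrow> 0 \<and>
              (\<forall>N F. is_distribution_function F \<and> (\<forall>x \<le> a. F x = 0) \<and>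
                     (\<forall>x \<ge> real_of_ereal b. F x = 1) \<and>
                     (\<forall>x \<ge> 0. \<bar>F x - measure \<mu> {..x}\<bar> \<le> eps N) \<longrightarrow>
                 (\<forall>u \<in> {0..1}. \<bar>gen_inv F u - gen_inv (\<lambda>x. measure \<mu> {..x}) u\<bar> \<le> r N))))
       \<and> (b = \<infinity> \<longrightarrow>
           (\<exists>\<alpha> > 0. \<exists>(xN :: nat \<Rightarrow> real) (r :: nat \<Rightarrow> real).
              (\<exists>c > 0. eventually (\<lambda>N. real N powr (-\<alpha>) * xN N \<ge> c) sequentially) \<and>
              r \<longlonglongrightarrow> 0 \<and>
              (\<forall>N F. is_distribution_function F \<and> (\<forall>x \<le> a. F x = 0) \<and>
                     (\<forall>x \<ge> 0. \<bar>F x - measure \<mu> {..x}\<bar> \<le> eps N) \<longrightarrow>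
                 (\<forall>u. 0 \<le> u \<and> u < 1 \<and> gen_inv (\<lambda>x. measure \<mu> {..x}) u \<le> xN N \<longrightarrow>
                     \<bar>gen_inv F u - gen_inv (\<lambda>x. measure \<mu> {..x}) u\<bar> \<le> r N))))"
proof -
  obtain g where "lower_density_distribution \<mu> a b g"
    and tail: "b = \<infinity> \<Longrightarrow> \<exists>t0 k \<gamma>. a < t0 \<and> 0 < k \<and> 0 < \<gamma> \<and> (\<forall>x\<ge>t0. k * x powr -\<gamma> \<le> g x)"
    using assumption2_lower_density_distribution[OF A2] by blast
  then interpret lower_density_distribution \<mu> a b g by simp
  have "eps \<longlonglongrightarrow> 0" by (rule bigo_powr_tendsto_zero[OF eps]) simp
  note bounded = quantile_uniform_convergence_bounded[OF _ this]
  have "eps \<in> o(\<lambda>N. real N powr -(1/12))"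
    by (rule landau_o.big_small_trans[OF eps powr_smallo_powr_sequentially]) simp
  note unbounded = quantile_uniform_convergence_unbounded[OF _ tail this]
  show ?thesis using bounded unbounded unfolding cdf_def by simp
qed

end
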